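(* Assume $\mathcal S\subseteq\mathcal D$. Let $F\in\mathbb R^{d\times s}$, $H=BFC$, $\bar F=F\bar C$, $\bar H=\bar B\bar F$. For $i=1,\dots,s$ let $\phi_i(\bar H)=\bar H_{ii}$ and $\gamma_i(\bar H)=\sum_{j\neq i}|\bar H_{ij}|$. If $\phi_i(\bar H)+\gamma_i(\bar H)<2$ and $\phi_i(\bar H)-\gamma_i(\bar H)>0$ for all $i=1,\dots,s$, then: (i) every trajectory of $\bar e[k+1]=(I_s-\bar H)\bar e[k]$ converges to $0$ exponentially; (ii) the system $e[k+1]=(I_{2n}-H)e[k]$ is stable in the sense of Lyapunov; (iii) for every trajectory of $e[k+1]=(I_{2n}-H)e[k]$ and every $p\in\mathcal S$, the component $e_p[k]$ converges to $0$ exponentially.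
   Context: Standing setup. Let $n\ge 1$ and consider a radial distribution network modeled as a tree with root node $0$ (the substation), non-root nodes $\mathcal N=\{1,\dots,n\}$, and edge set $\mathcal L$; each edge $(i,j)\in\mathcal L$ has resistance $r_{ij}\in\mathbb R$ and reactance $x_{ij}\in\mathbb R$. For a node $i$, $\mathcal L_i$ denotes the set of edges on the unique path from node $0$ to node $i$. Define $R^0,X^0\in\mathbb R^{n\times n}$ by $R^0_{ij}=2\sum_{(w,t)\in\mathcal L_i\cap\mathcal L_j} r_{wt}$ and $X^0_{ij}=2\sum_{(w,t)\in\mathcal L_i\cap\mathcal L_j} x_{wt}$. Let $\mathcal D_1\subseteq\mathcal N$ (nodes with a DER) and $\mathcal S_1\subseteq\mathcal N$ (nodes with a sensor) be nonempty, listed in increasing order; let $\mathcal D_2=\{i+n: i\in\mathcal D_1\}$, $\mathcal S_2=\{i+n:i\in\mathcal S_1\}$, $\mathcal D=\mathcal D_1\cup\mathcal D_2$, $\mathcal S=\mathcal S_1\cup\mathcal S_2$ (subsets of $\{1,\dots,2n\}$, listed in increasing order), $d=|\mathcal D|$, $s=|\mathcal S|$, $\overline{\mathcal D}=\{1,\dots,2n\}\setminus\mathcal D$, $\overline{\mathcal S}=\{1,\dots,2n\}\setminus\mathcal S$. For an increasingly ordered set $\Omega=\{i_1,\dots,i_g\}\subseteq\{1,\dots,c\}$, let $\Gamma_c(\Omega)=[\mathfrak e_{i_1}\ \cdots\ \mathfrak e_{i_g}]\in\mathbb R^{c\times g}$, where $\mathfrak e_\omega$ is the $\omega$-th standard basis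 vector of $\mathbb R^c$. Set $T^d=\Gamma_n(\mathcal D_1)$, $R=R^0T^d$, $X=X^0T^d\in\mathbb R^{n\times d/2}$, $T^s=\Gamma_{2n}(\mathcal S)^\top\in\mathbb R^{s\times 2n}$, and $A=I_{2n}$, $B=\begin{bmatrix}X & R\\ -\tfrac12 R & \tfrac12 X\end{bmatrix}\in\mathbb R^{2n\times d}$, $C=T^s$. The system $\Sigma^1$ is $e[k+1]=Ae[k]+Bu[k]$, $y[k]=Ce[k]$ with state $e[k]\in\mathbb R^{2n}$, input $u[k]\in\mathbb R^d$, output $y[k]\in\mathbb R^s$. Define the permutation matrix $T=[\Gamma_{2n}(\mathcal S\cap\mathcal D),\ \Gamma_{2n}(\mathcal S\cap\overline{\mathcal D}),\ \Gamma_{2n}(\overline{\mathcal S}\cap\mathcal D),\ \Gamma_{2n}(\overline{\mathcal S}\cap\overline{\mathcal D})]\in\mathbb R^{2n\times 2n}$ (each intersection listed in increasing order) and $G=\Gamma_{2n}(\{1,\dots,s\})\in\mathbb R^{2n\times s}$. The reduced system $\Sigma^2$ has $\bar A=I_s$, $\bar B=G^\top T^{-1}B\in\mathbb R^{s\times d}$, $\bar C=CTG\in\mathbb R^{s\times s}$, and reduced state $\bar e=G^\top T^{-1}e\in\mathbb R^s$. *)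

theory Defs
  imports "Jordan_Normal_Form.Matrix" "Jordan_Normal_Form.Gauss_Jordan_Elimination"
begin

text \<open>Paper indices are 1-based; JNF matrix/vector indices are 0-based.
  Paper entry (i,j) of a matrix is JNF entry (i-1,j-1); paper component e_p is JNF e $ (p-1).
  Index sets (D1, S1, D, S, ...) are kept 1-based as in the paper.\<close>

text \<open>Radial network: rooted tree on nodes {0..n} with root 0, given by a parent map
  par; the edge entering node t (t in 1..n) is (par t, t).\<close>

definition is_rooted_tree :: "nat \<Rightarrow> (nat \<Rightarrow> nat) \<Rightarrow> bool" where
  "is_rooted_tree n par \<longleftrightarrow> (\<forall>i\<in>{1..n}. par i \<in> {0..n} \<and> (\<exists>k. (par ^^ k) i = 0))"

definition tree_edges :: "nat \<Rightarrow> (nat \<Rightarrow> nat) \<Rightarrow> (nat \<times> nat) set" where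
  "tree_edges n par = (\<lambda>t. (par t, t)) ` {1..n}"

definition path_nodes :: "(nat \<Rightarrow> nat) \<Rightarrow> nat \<Rightarrow> nat set" where
  "path_nodes par i = {(par ^^ k) i | k. \<forall>l\<le>k. (par ^^ l) i \<noteq> 0}"

definition path_edges :: "(nat \<Rightarrow> nat) \<Rightarrow> nat \<Rightarrow> (nat \<times> nat) set" where
  "path_edges par i = (\<lambda>t. (par t, t)) ` path_nodes par i"

definition R0 :: "nat \<Rightarrow> (nat \<Rightarrow> nat) \<Rightarrow> (nat \<Rightarrow> nat \<Rightarrow> real) \<Rightarrow> real mat" where
  "R0 n par r = mat n n (\<lambda>(i,j).
     2 * (\<Sum>(w,t)\<in>path_edges par (i+1) \<inter> path_edges par (j+1). r w t))"

definition Gamma :: "nat \<Rightarrow> nat set \<Rightarrow> real mat" where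
  "Gamma c \<Omega> = mat c (card \<Omega>) (\<lambda>(i,k). if i + 1 = sorted_list_of_set \<Omega> ! k then 1 else 0)"

definition hcat :: "real mat \<Rightarrow> real mat \<Rightarrow> real mat" where
  "hcat A B = mat (dim_row A) (dim_col A + dim_col B)
     (\<lambda>(i,j). if j < dim_col A then A $$ (i,j) else B $$ (i, j - dim_col A))"

definition shiftn :: "nat \<Rightarrow> nat set \<Rightarrow> nat set" where
  "shiftn n A = (\<lambda>i. i + n) ` A"

definition Dset :: "nat \<Rightarrow> nat set \<Rightarrow> nat set" where
  "Dset n D1 = D1 \<union> shiftn n D1"

definition Bmat :: "nat \<Rightarrow> (nat \<Rightarrow> nat) \<Rightarrow> (nat \<Rightarrow> nat \<Rightarrow> real) \<Rightarrow> (nat \<Rightarrow> nat \<Rightarrow> real)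
    \<Rightarrow> nat set \<Rightarrow> real mat" where
  "Bmat n par r x D1 =
    (let Td = Gamma n D1; R = R0 n par r * Td; X = R0 n par x * Td
     in four_block_mat X R ((-1/2) \<cdot>\<^sub>m R) ((1/2) \<cdot>\<^sub>m X))"

definition Cmat :: "nat \<Rightarrow> nat set \<Rightarrow> real mat" where
  "Cmat n S1 = transpose_mat (Gamma (2*n) (Dset n S1))"

definition Tmat :: "nat \<Rightarrow> nat set \<Rightarrow> nat set \<Rightarrow> real mat" where
  "Tmat n D1 S1 =
    (let D = Dset n D1; S = Dset n S1; U = {1..2*n}
     in hcat (Gamma (2*n) (S \<inter> D)) (hcat (Gamma (2*n) (S \<inter> (U - D)))
          (hcat (Gamma (2*n) ((U - S) \<inter> D)) (Gamma (2*n) ((U - S) \<inter> (U - D))))))"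

definition Gmat :: "nat \<Rightarrow> nat set \<Rightarrow> real mat" where
  "Gmat n S1 = Gamma (2*n) {1..card (Dset n S1)}"

definition Bbar :: "nat \<Rightarrow> (nat \<Rightarrow> nat) \<Rightarrow> (nat \<Rightarrow> nat \<Rightarrow> real) \<Rightarrow> (nat \<Rightarrow> nat \<Rightarrow> real)
    \<Rightarrow> nat set \<Rightarrow> nat set \<Rightarrow> real mat" where
  "Bbar n par r x D1 S1 =
     transpose_mat (Gmat n S1) * the (mat_inverse (Tmat n D1 S1)) * Bmat n par r x D1"

definition Cbar :: "nat \<Rightarrow> nat set \<Rightarrow> nat set \<Rightarrow> real mat" where
  "Cbar n D1 S1 = Cmat n S1 * Tmat n D1 S1 * Gmat n S1"

definition vnorm :: "real vec \<Rightarrow> real" where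
  "vnorm v = sqrt (\<Sum>i<dim_vec v. (v $ i)^2)"

definition is_traj :: "nat \<Rightarrow> real mat \<Rightarrow> (nat \<Rightarrow> real vec) \<Rightarrow> bool" where
  "is_traj m M z \<longleftrightarrow> (\<forall>k. z k \<in> carrier_vec m \<and> z (Suc k) = M *\<^sub>v z k)"

definition exp_conv_zero :: "(nat \<Rightarrow> real) \<Rightarrow> bool" where
  "exp_conv_zero f \<longleftrightarrow> (\<exists>c \<rho>. 0 \<le> \<rho> \<and> \<rho> < 1 \<and> (\<forall>k. \<bar>f k\<bar> \<le> c * \<rho> ^ k))"

definition lyapunov_stable :: "nat \<Rightarrow> real mat \<Rightarrow> bool" where
  "lyapunov_stable m M \<longleftrightarrow> (\<forall>\<epsilon>>0. \<exists>\<delta>>0. \<forall>z. is_traj m M z \<longrightarrow> vnorm (z 0) < \<delta>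
      \<longrightarrow> (\<forall>k. vnorm (z k) < \<epsilon>))"

end

theory Submission
  imports Defs "Jordan_Normal_Form.Determinant"
begin

text \<open>Because every sensor sits at a DER node, \<open>Cbar\<close> is the identity and \<open>Bbar\<close> consists of
  the sensor rows of \<open>B\<close>: with \<open>P\<close> the selection matrix of the sensor coordinates and
  \<open>M = B F\<close>, the reduced gain is \<open>P\<^sup>T M\<close> and the full gain is \<open>M P\<^sup>T\<close>. The diagonal
  conditions say exactly that every absolute row sum of \<open>I - P\<^sup>T M\<close> is below 1, so it contracts
  the maximum norm and reduced trajectories decay geometrically. Since
  \<open>P\<^sup>T (I - M P\<^sup>T) = (I - P\<^sup>T M) P\<^sup>T\<close>, the sensor readings \<open>P\<^sup>T e[k]\<close> of a full trajectory
  form a reduced trajectory; and each full step changes \<open>e\<close> only by \<open>M P\<^sup>T e[k]\<close>, so the total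
  change is bounded by a geometric series, which gives Lyapunov stability.\<close>

definition l1_norm :: "real vec \<Rightarrow> real" where
  "l1_norm v = (\<Sum>i<dim_vec v. \<bar>v $ i\<bar>)"

lemma l1_norm_nonneg: "0 \<le> l1_norm v"
  unfolding l1_norm_def by (simp add: sum_nonneg)

lemma abs_le_l1_norm: "i < dim_vec v \<Longrightarrow> \<bar>v $ i\<bar> \<le> l1_norm v"
  unfolding l1_norm_def by (rule member_le_sum) auto

lemma abs_le_vnorm:
  assumes "i < dim_vec v"
  shows "\<bar>v $ i\<bar> \<le> vnorm v"
proof -
  have "(v $ i)\<^sup>2 \<le> (\<Sum>j<dim_vec v. (v $ j)\<^sup>2)"
    by (rule member_le_sum) (use assms in auto)
  then show ?thesis
    unfolding vnorm_def by (metis real_sqrt_abs real_sqrt_le_mono)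
qed

lemma vnorm_nonneg: "0 \<le> vnorm v"
  unfolding vnorm_def by (simp add: sum_nonneg)

lemma l1_norm_le_vnorm: "l1_norm v \<le> dim_vec v * vnorm v"
proof -
  have "l1_norm v \<le> (\<Sum>i<dim_vec v. vnorm v)"
    unfolding l1_norm_def by (rule sum_mono) (auto intro: abs_le_vnorm)
  then show ?thesis by simp
qed

lemma vnorm_le_l1_norm: "vnorm v \<le> l1_norm v"
proof -
  have "(\<Sum>j<dim_vec v. (v $ j)\<^sup>2) \<le> (\<Sum>j<dim_vec v. \<bar>v $ j\<bar> * l1_norm v)"
  proof (rule sum_mono)
    fix j assume "j \<in> {..<dim_vec v}"
    then have "\<bar>v $ j\<bar> * \<bar>v $ j\<bar> \<le> \<bar>v $ j\<bar> * l1_norm v"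
      by (intro mult_left_mono abs_le_l1_norm) auto
    then show "(v $ j)\<^sup>2 \<le> \<bar>v $ j\<bar> * l1_norm v" by (simp add: power2_eq_square)
  qed
  also have "\<dots> = (l1_norm v)\<^sup>2"
    unfolding l1_norm_def by (simp add: sum_distrib_right power2_eq_square)
  finally show ?thesis
    unfolding vnorm_def using l1_norm_nonneg[of v] real_le_lsqrt by blast
qed

lemma l1_norm_minus_le:
  "a \<in> carrier_vec m \<Longrightarrow> b \<in> carrier_vec m \<Longrightarrow> l1_norm (a - b) \<le> l1_norm a + l1_norm b"
  unfolding l1_norm_def by (auto simp: sum.distrib[symmetric] intro!: sum_mono abs_triangle_ineq4)

definition mat_abs_sum :: "real mat \<Rightarrow> real" where
  "mat_abs_sum N = (\<Sum>i<dim_row N. \<Sum>j<dim_col N. \<bar>N $$ (i,j)\<bar>)"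

lemma mat_abs_sum_nonneg: "0 \<le> mat_abs_sum N"
  unfolding mat_abs_sum_def by (simp add: sum_nonneg)

lemma abs_entry_le_mat_abs_sum:
  assumes "i < dim_row N" and "j < dim_col N"
  shows "\<bar>N $$ (i,j)\<bar> \<le> mat_abs_sum N"
proof -
  have "\<bar>N $$ (i,j)\<bar> \<le> (\<Sum>j<dim_col N. \<bar>N $$ (i,j)\<bar>)"
    by (rule member_le_sum) (use assms in auto)
  also have "\<dots> \<le> mat_abs_sum N"
    unfolding mat_abs_sum_def by (rule member_le_sum) (use assms in \<open>auto intro: sum_nonneg\<close>)
  finally show ?thesis .
qed

lemma abs_mult_mat_vec_le:
  fixes N :: "real mat"
  assumes "N \<in> carrier_mat a b" and "v \<in> carrier_vec b" and "i < a"
  shows "\<bar>(N *\<^sub>v v) $ i\<bar> \<le> (\<Sum>j<b. \<bar>N $$ (i,j)\<bar> * \<bar>v $ j\<bar>)"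
proof -
  have "\<bar>(N *\<^sub>v v) $ i\<bar> = \<bar>\<Sum>j<b. N $$ (i,j) * v $ j\<bar>"
    using assms by (simp add: scalar_prod_def lessThan_atLeast0)
  also have "\<dots> \<le> (\<Sum>j<b. \<bar>N $$ (i,j) * v $ j\<bar>)"
    by (rule sum_abs)
  finally show ?thesis by (simp add: abs_mult)
qed

lemma l1_norm_mult_mat_vec_le:
  assumes N: "N \<in> carrier_mat a b" and v: "v \<in> carrier_vec b"
  shows "l1_norm (N *\<^sub>v v) \<le> a * mat_abs_sum N * l1_norm v"
proof -
  have "\<bar>(N *\<^sub>v v) $ i\<bar> \<le> mat_abs_sum N * l1_norm v" if i: "i < a" for i
  proof -
    have "\<bar>(N *\<^sub>v v) $ i\<bar> \<le> (\<Sum>j<b. \<bar>N $$ (i,j)\<bar> * \<bar>v $ j\<bar>)"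
      by (rule abs_mult_mat_vec_le[OF N v i])
    also have "\<dots> \<le> (\<Sum>j<b. mat_abs_sum N * \<bar>v $ j\<bar>)"
      by (intro sum_mono mult_right_mono) (use N i in \<open>auto intro: abs_entry_le_mat_abs_sum\<close>)
    also have "\<dots> = mat_abs_sum N * l1_norm v"
      using v unfolding l1_norm_def by (simp add: sum_distrib_left)
    finally show ?thesis .
  qed
  then have "(\<Sum>i<a. \<bar>(N *\<^sub>v v) $ i\<bar>) \<le> (\<Sum>i<a. mat_abs_sum N * l1_norm v)"
    by (intro sum_mono) simp
  then show ?thesis using N unfolding l1_norm_def by simp
qed

section \<open>Trajectories of row-sum contractions\<close>

lemma is_traj_carrier: "is_traj m M z \<Longrightarrow> z k \<in> carrier_vec m"
  unfolding is_traj_def by blast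

lemma is_traj_Suc: "is_traj m M z \<Longrightarrow> z (Suc k) = M *\<^sub>v z k"
  unfolding is_traj_def by blast

context
  fixes A :: "real mat" and s :: nat and \<rho> :: real
  assumes A: "A \<in> carrier_mat s s" and \<rho>: "0 \<le> \<rho>"
    and row_sums: "\<And>i. i < s \<Longrightarrow> (\<Sum>j<s. \<bar>A $$ (i,j)\<bar>) \<le> \<rho>"
begin

lemma abs_traj_le:
  assumes z: "is_traj s A z" and i: "i < s"
  shows "\<bar>z k $ i\<bar> \<le> \<rho> ^ k * l1_norm (z 0)"
  using i
proof (induction k arbitrary: i)
  case 0
  then show ?case using is_traj_carrier[OF z, of 0] abs_le_l1_norm[of i "z 0"] by simp
next
  case (Suc k)
  have "\<bar>z (Suc k) $ i\<bar> \<le> (\<Sum>j<s. \<bar>A $$ (i,j)\<bar> * \<bar>z k $ j\<bar>)"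
    unfolding is_traj_Suc[OF z] by (rule abs_mult_mat_vec_le[OF A is_traj_carrier[OF z] Suc.prems])
  also have "\<dots> \<le> (\<Sum>j<s. \<bar>A $$ (i,j)\<bar>) * (\<rho> ^ k * l1_norm (z 0))"
    unfolding sum_distrib_right by (intro sum_mono mult_left_mono) (auto intro: Suc.IH)
  also have "\<dots> \<le> \<rho> * (\<rho> ^ k * l1_norm (z 0))"
    by (intro mult_right_mono row_sums Suc.prems) (use \<rho> l1_norm_nonneg in auto)
  finally show ?case by simp
qed

lemma l1_norm_traj_le:
  assumes z: "is_traj s A z"
  shows "l1_norm (z k) \<le> s * \<rho> ^ k * l1_norm (z 0)"
proof -
  have "(\<Sum>i<s. \<bar>z k $ i\<bar>) \<le> (\<Sum>i<s. \<rho> ^ k * l1_norm (z 0))"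
    by (intro sum_mono abs_traj_le[OF z]) simp
  then show ?thesis using is_traj_carrier[OF z, of k] unfolding l1_norm_def[of "z k"] by simp
qed

end

lemma diag_dominance_imp_row_sum_lt_1:
  fixes H :: "real mat"
  assumes H: "H \<in> carrier_mat s s" and i: "i < s"
    and "H $$ (i,i) + (\<Sum>j\<in>{0..<s} - {i}. \<bar>H $$ (i,j)\<bar>) < 2"
    and "H $$ (i,i) - (\<Sum>j\<in>{0..<s} - {i}. \<bar>H $$ (i,j)\<bar>) > 0"
  shows "(\<Sum>j<s. \<bar>(1\<^sub>m s - H) $$ (i,j)\<bar>) < 1"
proof -
  have "(\<Sum>j<s. \<bar>(1\<^sub>m s - H) $$ (i,j)\<bar>)
      = \<bar>(1\<^sub>m s - H) $$ (i,i)\<bar> + (\<Sum>j\<in>{0..<s} - {i}. \<bar>(1\<^sub>m s - H) $$ (i,j)\<bar>)"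
    using i by (simp add: lessThan_atLeast0 sum.remove)
  also have "\<dots> = \<bar>1 - H $$ (i,i)\<bar> + (\<Sum>j\<in>{0..<s} - {i}. \<bar>H $$ (i,j)\<bar>)"
    using H i by (auto intro!: sum.cong)
  finally show ?thesis using assms(3,4) by linarith
qed

lemma diag_dominance_imp_row_sum_bound:
  fixes H :: "real mat"
  assumes H: "H \<in> carrier_mat s s"
    and dom: "\<forall>i<s. H $$ (i,i) + (\<Sum>j\<in>{0..<s} - {i}. \<bar>H $$ (i,j)\<bar>) < 2 \<and>
                    H $$ (i,i) - (\<Sum>j\<in>{0..<s} - {i}. \<bar>H $$ (i,j)\<bar>) > 0"
  obtains \<rho> where "0 \<le> \<rho>" "\<rho> < 1" "\<And>i. i < s \<Longrightarrow> (\<Sum>j<s. \<bar>(1\<^sub>m s - H) $$ (i,j)\<bar>) \<le> \<rho>"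
proof -
  define row_sum where "row_sum i = (\<Sum>j<s. \<bar>(1\<^sub>m s - H) $$ (i,j)\<bar>)" for i
  define \<rho> where "\<rho> = Max (insert 0 (row_sum ` {..<s}))"
  have "\<rho> \<in> insert 0 (row_sum ` {..<s})"
    unfolding \<rho>_def by (rule Max_in) auto
  moreover have "row_sum i < 1" if "i < s" for i
    unfolding row_sum_def using diag_dominance_imp_row_sum_lt_1[OF H that] dom that by blast
  ultimately have "\<rho> < 1" by auto
  moreover have "0 \<le> \<rho>" "\<And>i. i < s \<Longrightarrow> row_sum i \<le> \<rho>"
    unfolding \<rho>_def by auto
  ultimately show thesis using that unfolding row_sum_def by blast
qed

section \<open>Stability of the closed loop \<open>I - M Q\<close>\<close>

lemma is_traj_intertwined:
  assumes Q: "Q \<in> carrier_mat s m" and N: "N \<in> carrier_mat m m" and A: "A \<in> carrier_mat s s"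
    and QN: "Q * N = A * Q" and e: "is_traj m N e"
  shows "is_traj s A (\<lambda>k. Q *\<^sub>v e k)"
  unfolding is_traj_def
proof
  fix k
  have ek: "e k \<in> carrier_vec m" by (rule is_traj_carrier[OF e])
  have "Q *\<^sub>v e (Suc k) = (Q * N) *\<^sub>v e k"
    unfolding is_traj_Suc[OF e] using Q N ek by simp
  also have "\<dots> = A *\<^sub>v (Q *\<^sub>v e k)"
    unfolding QN using A Q ek by simp
  finally show "Q *\<^sub>v e k \<in> carrier_vec s \<and> Q *\<^sub>v e (Suc k) = A *\<^sub>v (Q *\<^sub>v e k)"
    using Q ek by simp
qed

lemma one_minus_mult_intertwined:
  fixes M Q :: "real mat"
  assumes M: "M \<in> carrier_mat m s" and Q: "Q \<in> carrier_mat s m"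
  shows "Q * (1\<^sub>m m - M * Q) = (1\<^sub>m s - Q * M) * Q"
proof -
  have MQ: "M * Q \<in> carrier_mat m m" and QM: "Q * M \<in> carrier_mat s s" using M Q by auto
  have "Q * (1\<^sub>m m - M * Q) = Q * 1\<^sub>m m - Q * (M * Q)"
    by (rule mult_minus_distrib_mat[OF Q one_carrier_mat MQ])
  also have "\<dots> = 1\<^sub>m s * Q - (Q * M) * Q"
    using M Q by (simp add: assoc_mult_mat[of _ s m _ s _ m])
  also have "\<dots> = (1\<^sub>m s - Q * M) * Q"
    by (rule minus_mult_distrib_mat[symmetric, OF one_carrier_mat QM Q])
  finally show ?thesis .
qed

lemma closed_loop_reduced_traj:
  assumes M: "M \<in> carrier_mat m s" and Q: "Q \<in> carrier_mat s m"
    and e: "is_traj m (1\<^sub>m m - M * Q) e"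
  shows "is_traj s (1\<^sub>m s - Q * M) (\<lambda>k. Q *\<^sub>v e k)"
proof (rule is_traj_intertwined[OF Q _ _ one_minus_mult_intertwined[OF M Q] e])
  show "1\<^sub>m m - M * Q \<in> carrier_mat m m" "1\<^sub>m s - Q * M \<in> carrier_mat s s"
    using M Q by (intro minus_carrier_mat mult_carrier_mat; auto)+
qed

lemma closed_loop_l1_norm_bounded:
  assumes M: "M \<in> carrier_mat m s" and Q: "Q \<in> carrier_mat s m"
    and \<rho>: "0 \<le> \<rho>" "\<rho> < 1"
    and row_sums: "\<And>i. i < s \<Longrightarrow> (\<Sum>j<s. \<bar>(1\<^sub>m s - Q * M) $$ (i,j)\<bar>) \<le> \<rho>"
    and e: "is_traj m (1\<^sub>m m - M * Q) e"
  shows "l1_norm (e k) \<le> (1 + m * mat_abs_sum M * s * s * mat_abs_sum Q / (1 - \<rho>)) * l1_norm (e 0)"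
proof -
  let ?A = "1\<^sub>m s - Q * M"
  define y where "y k = Q *\<^sub>v e k" for k
  have A: "?A \<in> carrier_mat s s"
    using M Q by (intro minus_carrier_mat mult_carrier_mat) auto
  have y: "is_traj s ?A y"
    unfolding y_def by (rule closed_loop_reduced_traj[OF M Q e])
  have ec: "e k \<in> carrier_vec m" for k by (rule is_traj_carrier[OF e])
  have yc: "y k \<in> carrier_vec s" for k by (rule is_traj_carrier[OF y])
  define W where "W = m * mat_abs_sum M * (s * l1_norm (y 0))"
  have W: "0 \<le> W" unfolding W_def by (simp add: mat_abs_sum_nonneg l1_norm_nonneg)
  have step: "l1_norm (e (Suc k)) \<le> l1_norm (e k) + W * \<rho> ^ k" for k
  proof -
    have "e (Suc k) = e k - M *\<^sub>v y k"
      unfolding is_traj_Suc[OF e] y_def using ec[of k] M Q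
      by (simp add: minus_mult_distrib_mat_vec[of _ m m] assoc_mult_mat_vec[of _ m s _ m])
    then have "l1_norm (e (Suc k)) \<le> l1_norm (e k) + l1_norm (M *\<^sub>v y k)"
      using l1_norm_minus_le[OF ec] M yc by simp
    also have "l1_norm (M *\<^sub>v y k) \<le> m * mat_abs_sum M * l1_norm (y k)"
      by (rule l1_norm_mult_mat_vec_le[OF M yc])
    also have "\<dots> \<le> m * mat_abs_sum M * (s * \<rho> ^ k * l1_norm (y 0))"
      by (intro mult_left_mono l1_norm_traj_le[OF A \<rho>(1) row_sums y])
        (simp_all add: mat_abs_sum_nonneg)
    finally show ?thesis unfolding W_def by (simp add: mult_ac)
  qed
  have partial_sums: "l1_norm (e k) \<le> l1_norm (e 0) + W * (\<Sum>j<k. \<rho> ^ j)" for k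
  proof (induction k)
    case (Suc k)
    then show ?case using step[of k] by (simp add: distrib_left)
  qed simp
  have "(\<Sum>j<k. \<rho> ^ j) \<le> 1 / (1 - \<rho>)"
    using \<rho> by (simp add: sum_gp_strict divide_right_mono)
  then have "W * (\<Sum>j<k. \<rho> ^ j) \<le> W / (1 - \<rho>)"
    using mult_left_mono[OF _ W] by fastforce
  also have "\<dots> \<le> m * mat_abs_sum M * (s * (s * mat_abs_sum Q * l1_norm (e 0))) / (1 - \<rho>)"
    unfolding W_def y_def using l1_norm_mult_mat_vec_le[OF Q ec[of 0]] \<rho>
    by (intro divide_right_mono mult_left_mono) (simp_all add: mat_abs_sum_nonneg)
  finally show ?thesis
    using partial_sums[of k] by (simp add: ring_distribs mult_ac)
qed

lemma lyapunov_stable_if_l1_norm_bounded: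
  assumes K: "0 < K"
    and bound: "\<And>e k. is_traj m N e \<Longrightarrow> l1_norm (e k) \<le> K * l1_norm (e 0)"
  shows "lyapunov_stable m N"
  unfolding lyapunov_stable_def
proof (intro allI impI)
  fix \<epsilon> :: real assume \<epsilon>: "\<epsilon> > 0"
  show "\<exists>\<delta>>0. \<forall>z. is_traj m N z \<longrightarrow> vnorm (z 0) < \<delta> \<longrightarrow> (\<forall>k. vnorm (z k) < \<epsilon>)"
  proof (intro exI[of _ "\<epsilon> / (K * (m + 1))"] conjI allI impI)
    show "0 < \<epsilon> / (K * (m + 1))" using \<epsilon> K by simp
    fix z k assume z: "is_traj m N z" and z0: "vnorm (z 0) < \<epsilon> / (K * (m + 1))"
    have "vnorm (z k) \<le> K * l1_norm (z 0)"
      using vnorm_le_l1_norm bound[OF z] by (rule order_trans)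
    also have "\<dots> \<le> K * ((m + 1) * vnorm (z 0))"
      using l1_norm_le_vnorm[of "z 0"] is_traj_carrier[OF z, of 0] K vnorm_nonneg[of "z 0"]
      by (intro mult_left_mono) (auto simp: ring_distribs)
    also have "\<dots> < \<epsilon>"
      using z0 K by (simp add: pos_less_divide_eq mult_ac)
    finally show "vnorm (z k) < \<epsilon>" .
  qed
qed

definition sel_mat :: "nat \<Rightarrow> nat list \<Rightarrow> nat \<Rightarrow> real mat" where
  "sel_mat c L k = mat c k (\<lambda>(i,j). if i + 1 = L ! j then 1 else 0)"

lemma sel_mat_carrier: "sel_mat c L k \<in> carrier_mat c k"
  unfolding sel_mat_def by simp

lemma Gamma_eq_sel_mat: "Gamma c \<Omega> = sel_mat c (sorted_list_of_set \<Omega>) (card \<Omega>)"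
  unfolding Gamma_def sel_mat_def by simp

lemma hcat_sel_mat:
  "length L = a \<Longrightarrow> hcat (sel_mat c L a) (sel_mat c L' b) = sel_mat c (L @ L') (a + b)"
  unfolding hcat_def sel_mat_def by (intro eq_matI) (auto simp: nth_append)

lemma sel_mat_cong: "(\<And>j. j < k \<Longrightarrow> L ! j = L' ! j) \<Longrightarrow> sel_mat c L k = sel_mat c L' k"
  unfolding sel_mat_def by (intro eq_matI) auto

lemma transpose_sel_mat_mult_vec:
  assumes v: "v \<in> carrier_vec c" and j: "j < k" and L: "L ! j \<in> {1..c}"
  shows "(transpose_mat (sel_mat c L k) *\<^sub>v v) $ j = v $ (L ! j - 1)"
proof -
  have "(transpose_mat (sel_mat c L k) *\<^sub>v v) $ j
      = (\<Sum>i\<in>{0..<c}. (if i + 1 = L ! j then 1 else 0) * v $ i)"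
    using v j by (simp add: sel_mat_def scalar_prod_def)
  also have "\<dots> = (\<Sum>i\<in>{0..<c}. if i = L ! j - 1 then v $ i else 0)"
    by (rule sum.cong) (use L in auto)
  finally show ?thesis using L by auto
qed

lemma sel_mat_orthonormal:
  assumes "distinct L" "length L = k" "set L \<subseteq> {1..c}"
  shows "transpose_mat (sel_mat c L k) * sel_mat c L k = 1\<^sub>m k"
proof (rule eq_matI)
  fix i j assume "i < dim_row (1\<^sub>m k)" "j < dim_col (1\<^sub>m k)"
  then have i: "i < k" and j: "j < k" by auto
  have Li: "L ! i \<in> {1..c}" using assms i nth_mem by blast
  have "(transpose_mat (sel_mat c L k) * sel_mat c L k) $$ (i,j) =
      (\<Sum>t\<in>{0..<c}. (if t + 1 = L ! i then 1 else 0) * (if t + 1 = L ! j then 1 else 0))"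
    using i j by (simp add: sel_mat_def scalar_prod_def)
  also have "\<dots> = (\<Sum>t\<in>{0..<c}. if t = L ! i - 1 then (if L ! i = L ! j then 1 else 0) else 0)"
    by (rule sum.cong) (use Li in auto)
  also have "\<dots> = 1\<^sub>m k $$ (i,j)"
    using Li assms i j by (auto simp: nth_eq_iff_index_eq)
  finally show "(transpose_mat (sel_mat c L k) * sel_mat c L k) $$ (i,j) = 1\<^sub>m k $$ (i,j)" .
qed (auto simp: sel_mat_def)

lemma sel_mat_mult_initial_segment:
  assumes "k \<le> m"
  shows "sel_mat c L m * sel_mat m [1..<k+1] k = sel_mat c L k"
proof (rule eq_matI)
  fix i j assume "i < dim_row (sel_mat c L k)" "j < dim_col (sel_mat c L k)"
  then have i: "i < c" and j: "j < k" by (auto simp: sel_mat_def)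
  have "(sel_mat c L m * sel_mat m [1..<k+1] k) $$ (i,j) =
      (\<Sum>t\<in>{0..<m}. (if i + 1 = L ! t then 1 else 0) * (if t + 1 = [1..<k+1] ! j then 1 else 0))"
    using i j by (simp add: sel_mat_def scalar_prod_def)
  also have "\<dots> = (\<Sum>t\<in>{0..<m}. if t = j then (if i + 1 = L ! j then 1 else 0) else 0)"
    by (rule sum.cong) (use j nth_upt[of 1 j "k+1"] in \<open>auto simp del: upt_Suc\<close>)
  finally show "(sel_mat c L m * sel_mat m [1..<k+1] k) $$ (i,j) = sel_mat c L k $$ (i,j)"
    using i j assms by (simp add: sel_mat_def)
qed (auto simp: sel_mat_def)

lemma mat_inverse_orthogonal:
  fixes T :: "real mat"
  assumes T: "T \<in> carrier_mat N N" and TT: "transpose_mat T * T = 1\<^sub>m N"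
  shows "the (mat_inverse T) = transpose_mat T"
proof -
  have TT': "T * transpose_mat T = 1\<^sub>m N"
    by (rule mat_mult_left_right_inverse[OF _ T TT]) (use T in simp)
  have "T \<in> Units (ring_mat TYPE(real) N undefined)"
    unfolding Units_def using T TT TT'
    by (auto simp: ring_mat_simps intro!: bexI[of _ "transpose_mat T"])
  then obtain X where X: "mat_inverse T = Some X"
    using mat_inverse(1)[OF T, of undefined] by (cases "mat_inverse T") auto
  from mat_inverse(2)[OF T X] have XT: "X * T = 1\<^sub>m N" and Xc: "X \<in> carrier_mat N N" by auto
  have "X = (X * T) * transpose_mat T"
    using TT' Xc T by (simp add: assoc_mult_mat[of _ N N _ N _ N])
  then show ?thesis using X XT T by simp
qed

lemma sensor_feedback_stability:
  fixes M :: "real mat" and m :: nat and L :: "nat list"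
  defines "P \<equiv> sel_mat m L (length L)"
  assumes M: "M \<in> carrier_mat m (length L)" and L: "set L \<subseteq> {1..m}"
    and dom: "\<forall>i<length L.
       (transpose_mat P * M) $$ (i,i) + (\<Sum>j\<in>{0..<length L} - {i}. \<bar>(transpose_mat P * M) $$ (i,j)\<bar>) < 2 \<and>
       (transpose_mat P * M) $$ (i,i) - (\<Sum>j\<in>{0..<length L} - {i}. \<bar>(transpose_mat P * M) $$ (i,j)\<bar>) > 0"
  shows "(\<forall>eb. is_traj (length L) (1\<^sub>m (length L) - transpose_mat P * M) eb
              \<longrightarrow> exp_conv_zero (\<lambda>k. vnorm (eb k)))
     \<and> lyapunov_stable m (1\<^sub>m m - M * transpose_mat P)
     \<and> (\<forall>e. is_traj m (1\<^sub>m m - M * transpose_mat P) e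
            \<longrightarrow> (\<forall>p \<in> set L. exp_conv_zero (\<lambda>k. e k $ (p - 1))))"
proof -
  define s where "s = length L"
  define Q where "Q = transpose_mat P"
  define A where "A = 1\<^sub>m s - Q * M"
  have Q: "Q \<in> carrier_mat s m" unfolding Q_def P_def s_def using sel_mat_carrier by simp
  have Ms: "M \<in> carrier_mat m s" using M unfolding s_def .
  have A: "A \<in> carrier_mat s s"
    unfolding A_def using Q Ms by (intro minus_carrier_mat mult_carrier_mat) auto
  obtain \<rho> where \<rho>: "0 \<le> \<rho>" "\<rho> < 1" and row_sums: "\<And>i. i < s \<Longrightarrow> (\<Sum>j<s. \<bar>A $$ (i,j)\<bar>) \<le> \<rho>"
    using diag_dominance_imp_row_sum_bound[of "Q * M" s] Q Ms dom
    unfolding A_def Q_def s_def by auto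
  have reduced: "exp_conv_zero (\<lambda>k. vnorm (eb k))" if eb: "is_traj s A eb" for eb
  proof -
    have "\<bar>vnorm (eb k)\<bar> \<le> (s * l1_norm (eb 0)) * \<rho> ^ k" for k
      using vnorm_le_l1_norm[of "eb k"] l1_norm_traj_le[OF A \<rho>(1) row_sums eb, of k]
      by (simp add: vnorm_nonneg mult_ac)
    then show ?thesis unfolding exp_conv_zero_def using \<rho> by blast
  qed
  have sensors: "exp_conv_zero (\<lambda>k. e k $ (p - 1))"
    if e: "is_traj m (1\<^sub>m m - M * Q) e" and p: "p \<in> set L" for e p
  proof -
    obtain j where j: "j < s" "L ! j = p" using p unfolding s_def by (auto simp: in_set_conv_nth)
    have y: "is_traj s A (\<lambda>k. Q *\<^sub>v e k)"
      unfolding A_def by (rule closed_loop_reduced_traj[OF Ms Q e])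
    have "e k $ (p - 1) = (Q *\<^sub>v e k) $ j" for k
      using transpose_sel_mat_mult_vec[OF is_traj_carrier[OF e] j(1)[unfolded s_def]] j L p
      unfolding Q_def P_def s_def by auto
    then have "\<bar>e k $ (p - 1)\<bar> \<le> l1_norm (Q *\<^sub>v e 0) * \<rho> ^ k" for k
      using abs_traj_le[OF A \<rho>(1) row_sums y j(1), of k] by (simp add: mult.commute)
    then show ?thesis unfolding exp_conv_zero_def using \<rho> by blast
  qed
  define K where "K = 1 + m * mat_abs_sum M * s * s * mat_abs_sum Q / (1 - \<rho>)"
  have "0 < K"
    unfolding K_def using \<rho> mat_abs_sum_nonneg[of M] mat_abs_sum_nonneg[of Q]
    by (intro add_pos_nonneg divide_nonneg_pos) simp_all
  then have "lyapunov_stable m (1\<^sub>m m - M * Q)"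
    using closed_loop_l1_norm_bounded[OF Ms Q \<rho> row_sums[unfolded A_def]]
    unfolding K_def by (rule lyapunov_stable_if_l1_norm_bounded)
  then show ?thesis using reduced sensors unfolding A_def Q_def s_def by blast
qed

section \<open>The reduced system of the network\<close>

lemma Dset_subset: "A \<subseteq> {1..n} \<Longrightarrow> Dset n A \<subseteq> {1..2*n}"
  unfolding Dset_def shiftn_def by auto

lemma card_Dset:
  assumes "A \<subseteq> {1..n}"
  shows "card (Dset n A) = 2 * card A"
proof -
  have fin: "finite A" using assms finite_subset by blast
  have "A \<inter> shiftn n A = {}"
  proof (rule ccontr)
    assume "A \<inter> shiftn n A \<noteq> {}"
    then obtain i where "i \<in> A" "i + n \<in> A" unfolding shiftn_def by auto
    then have "i \<in> {1..n}" "i + n \<in> {1..n}" using assms by blast+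
    then show False by simp
  qed
  moreover have "card (shiftn n A) = card A"
    unfolding shiftn_def by (rule card_image) (simp add: inj_on_def)
  ultimately show ?thesis
    unfolding Dset_def using fin by (simp add: card_Un_disjoint shiftn_def)
qed

lemma Bmat_carrier:
  assumes "D1 \<subseteq> {1..n}"
  shows "Bmat n par r x D1 \<in> carrier_mat (2*n) (card (Dset n D1))"
proof -
  have R0: "R0 n par q * Gamma n D1 \<in> carrier_mat n (card D1)" for q
    by (rule mult_carrier_mat[of _ n n]) (simp_all add: R0_def Gamma_def)
  have "Bmat n par r x D1 \<in> carrier_mat (n + n) (card D1 + card D1)"
    unfolding Bmat_def Let_def using R0 by (intro four_block_carrier_mat smult_carrier_mat)
  then show ?thesis using card_Dset[OF assms] by (simp add: mult_2)
qed

definition Tmat_order :: "nat \<Rightarrow> nat set \<Rightarrow> nat set \<Rightarrow> nat list" where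
  "Tmat_order n D1 S1 =
    (let D = Dset n D1; S = Dset n S1; U = {1..2*n}
     in sorted_list_of_set (S \<inter> D) @ sorted_list_of_set (S \<inter> (U - D)) @
        sorted_list_of_set ((U - S) \<inter> D) @ sorted_list_of_set ((U - S) \<inter> (U - D)))"

lemma Tmat_eq_sel_mat:
  "Tmat n D1 S1 = sel_mat (2*n) (Tmat_order n D1 S1) (length (Tmat_order n D1 S1))"
  unfolding Tmat_def Tmat_order_def Let_def Gamma_eq_sel_mat
  by (simp add: hcat_sel_mat add.assoc)

lemma Tmat_order_permutes:
  assumes "D1 \<subseteq> {1..n}" "S1 \<subseteq> {1..n}"
  shows "distinct (Tmat_order n D1 S1)" "set (Tmat_order n D1 S1) = {1..2*n}"
  using Dset_subset[OF assms(1)] Dset_subset[OF assms(2)]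
  unfolding Tmat_order_def Let_def by (auto simp: finite_subset)

lemma Tmat_order_prefix:
  assumes "S1 \<subseteq> {1..n}" and "Dset n S1 \<subseteq> Dset n D1" and "j < card (Dset n S1)"
  shows "Tmat_order n D1 S1 ! j = sorted_list_of_set (Dset n S1) ! j"
proof -
  have "Dset n S1 \<inter> Dset n D1 = Dset n S1" using assms(2) by blast
  then show ?thesis
    using assms(3) unfolding Tmat_order_def Let_def by (simp add: nth_append)
qed

lemma Tmat_orthogonal:
  assumes "D1 \<subseteq> {1..n}" "S1 \<subseteq> {1..n}"
  shows "Tmat n D1 S1 \<in> carrier_mat (2*n) (2*n)"
    and "transpose_mat (Tmat n D1 S1) * Tmat n D1 S1 = 1\<^sub>m (2*n)"
proof -
  have "length (Tmat_order n D1 S1) = 2*n"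
    using distinct_card Tmat_order_permutes[OF assms] by fastforce
  then show "Tmat n D1 S1 \<in> carrier_mat (2*n) (2*n)"
    and "transpose_mat (Tmat n D1 S1) * Tmat n D1 S1 = 1\<^sub>m (2*n)"
    unfolding Tmat_eq_sel_mat using sel_mat_carrier sel_mat_orthonormal Tmat_order_permutes[OF assms]
    by auto
qed

lemma Gmat_eq_sel_mat: "Gmat n S1 = sel_mat (2*n) [1..<card (Dset n S1) + 1] (card (Dset n S1))"
proof -
  have "sorted_list_of_set {1..k} = [1..<k+1]" for k :: nat
    by (metis atLeastLessThanSuc_atLeastAtMost sorted_list_of_set_range Suc_eq_plus1)
  then show ?thesis unfolding Gmat_def Gamma_eq_sel_mat by simp
qed

lemma Tmat_mult_Gmat:
  assumes "D1 \<subseteq> {1..n}" "S1 \<subseteq> {1..n}" and SD: "Dset n S1 \<subseteq> Dset n D1"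
  shows "Tmat n D1 S1 * Gmat n S1 = Gamma (2*n) (Dset n S1)"
proof -
  have len: "length (Tmat_order n D1 S1) = 2*n"
    using distinct_card Tmat_order_permutes[OF assms(1,2)] by fastforce
  have "card (Dset n S1) \<le> 2*n"
    using card_mono[OF _ Dset_subset[OF assms(2)]] by simp
  then have "Tmat n D1 S1 * Gmat n S1 = sel_mat (2*n) (Tmat_order n D1 S1) (card (Dset n S1))"
    unfolding Tmat_eq_sel_mat Gmat_eq_sel_mat len by (rule sel_mat_mult_initial_segment)
  also have "\<dots> = Gamma (2*n) (Dset n S1)"
    unfolding Gamma_eq_sel_mat using Tmat_order_prefix[OF assms(2) SD] by (rule sel_mat_cong)
  finally show ?thesis .
qed

lemma Cbar_eq_one:
  assumes "D1 \<subseteq> {1..n}" "S1 \<subseteq> {1..n}" and "Dset n S1 \<subseteq> Dset n D1"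
  shows "Cbar n D1 S1 = 1\<^sub>m (card (Dset n S1))"
proof -
  let ?P = "Gamma (2*n) (Dset n S1)"
  have "Cbar n D1 S1 = transpose_mat ?P * (Tmat n D1 S1 * Gmat n S1)"
    unfolding Cbar_def Cmat_def using Tmat_orthogonal(1)[OF assms(1,2)]
    by (intro assoc_mult_mat) (auto simp: Gamma_def Gmat_def)
  also have "\<dots> = 1\<^sub>m (card (Dset n S1))"
    unfolding Tmat_mult_Gmat[OF assms] Gamma_eq_sel_mat
    using Dset_subset[OF assms(2)] finite_subset[OF Dset_subset[OF assms(2)]]
    by (intro sel_mat_orthonormal) auto
  finally show ?thesis .
qed

lemma Bbar_eq:
  assumes "D1 \<subseteq> {1..n}" "S1 \<subseteq> {1..n}" and "Dset n S1 \<subseteq> Dset n D1"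
  shows "Bbar n par r x D1 S1 = transpose_mat (Gamma (2*n) (Dset n S1)) * Bmat n par r x D1"
proof -
  note T = Tmat_orthogonal[OF assms(1,2)]
  have "transpose_mat (Gmat n S1) * transpose_mat (Tmat n D1 S1)
      = transpose_mat (Tmat n D1 S1 * Gmat n S1)"
    using T(1) by (intro transpose_mult[symmetric]) (auto simp: Gmat_def Gamma_def)
  then show ?thesis
    unfolding Bbar_def mat_inverse_orthogonal[OF T] Tmat_mult_Gmat[OF assms] by simp
qed

theorem theorem3:
  fixes n :: nat and par :: "nat \<Rightarrow> nat" and r x :: "nat \<Rightarrow> nat \<Rightarrow> real"
    and D1 S1 :: "nat set" and F :: "real mat"
  assumes n: "n \<ge> 1"
    and tree: "is_rooted_tree n par"
    and D1: "D1 \<subseteq> {1..n}" "D1 \<noteq> {}"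
    and S1: "S1 \<subseteq> {1..n}" "S1 \<noteq> {}"
    and SD: "Dset n S1 \<subseteq> Dset n D1"
    and F: "F \<in> carrier_mat (card (Dset n D1)) (card (Dset n S1))"
    and diag: "\<forall>i < card (Dset n S1).
       (let Hb = Bbar n par r x D1 S1 * (F * Cbar n D1 S1);
            \<gamma> = (\<Sum>j\<in>{0..<card (Dset n S1)} - {i}. \<bar>Hb $$ (i,j)\<bar>)
        in Hb $$ (i,i) + \<gamma> < 2 \<and> Hb $$ (i,i) - \<gamma> > 0)"
  shows
    "(\<forall>eb. is_traj (card (Dset n S1))
              (1\<^sub>m (card (Dset n S1)) - Bbar n par r x D1 S1 * (F * Cbar n D1 S1)) eb
            \<longrightarrow> exp_conv_zero (\<lambda>k. vnorm (eb k)))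
     \<and> lyapunov_stable (2*n) (1\<^sub>m (2*n) - Bmat n par r x D1 * F * Cmat n S1)
     \<and> (\<forall>e. is_traj (2*n) (1\<^sub>m (2*n) - Bmat n par r x D1 * F * Cmat n S1) e
            \<longrightarrow> (\<forall>p \<in> Dset n S1. exp_conv_zero (\<lambda>k. e k $ (p - 1))))"
proof -
  define L where "L = sorted_list_of_set (Dset n S1)"
  define M where "M = Bmat n par r x D1 * F"
  have fin: "finite (Dset n S1)" using Dset_subset[OF S1(1)] finite_subset by blast
  have len: "length L = card (Dset n S1)" unfolding L_def by simp
  have P: "Gamma (2*n) (Dset n S1) = sel_mat (2*n) L (length L)"
    unfolding Gamma_eq_sel_mat L_def len[unfolded L_def] ..
  have M: "M \<in> carrier_mat (2*n) (length L)"
    unfolding M_def len using mult_carrier_mat[OF Bmat_carrier[OF D1(1)] F] .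
  have Hb: "Bbar n par r x D1 S1 * (F * Cbar n D1 S1) = transpose_mat (sel_mat (2*n) L (length L)) * M"
    unfolding Bbar_eq[OF D1(1) S1(1) SD] Cbar_eq_one[OF D1(1) S1(1) SD] P M_def
    using F Bmat_carrier[OF D1(1)] sel_mat_carrier len
    by (simp add: assoc_mult_mat[of _ "length L" "2*n" _ "card (Dset n D1)" _ "length L"])
  have H: "Bmat n par r x D1 * F * Cmat n S1 = M * transpose_mat (sel_mat (2*n) L (length L))"
    unfolding Cmat_def M_def P ..
  have "set L = Dset n S1" and "set L \<subseteq> {1..2*n}"
    unfolding L_def using fin Dset_subset[OF S1(1)] by auto
  then show ?thesis
    using sensor_feedback_stability[OF M] diag unfolding Hb H len[symmetric] Let_def by simp
qed

end
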